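(* Let $X$ be a complex Banach space and let $T\in\mathcal{B}(X)$ be a power-bounded operator. Suppose that $\omega:\mathbb{Z}_+\to(0,\infty)$ is a decreasing function such that $\|T^n(I-T)\|\leq\omega(n)$ for all $n\in\mathbb{Z}_+$ and $\omega(n)\to0$ as $n\to\infty$, and define $\omega^*:(0,\infty)\to\mathbb{Z}_+$ by $\omega^*(s):=\min\{n\in\mathbb{Z}_+:\omega(n)\leq s\}$. Then $\sigma(T)\cap\mathbb{T}\subset\{1\}$ and, for any $c\in(0,1)$, $$\|R(\mathrm{e}^{\mathrm{i}\theta},T)\|=O\left(\frac{1}{|\theta|}+\omega^*(c|\theta|)\right)\quad\text{as }|\theta|\to0.$$
   Context: $T$ is power-bounded if $\sup_{n\geq0}\|T^n\|<\infty$. $\mathbb{T}$ is the unit circle, $\sigma(T)$ the spectrum, and $R(\lambda,T)=(\lambda-T)^{-1}$ the resolvent for $\lambda$ in the resolvent set. *)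

theory Defs
  imports "HOL-Analysis.Analysis" "HOL-Library.Landau_Symbols"
begin

text \<open>Complex Banach spaces: a real Banach space together with a compatible
  complex scalar multiplication (the library only has real vector spaces).\<close>

class complex_banach = banach +
  fixes scaleC :: "complex \<Rightarrow> 'a \<Rightarrow> 'a"
  assumes scaleC_add_right: "scaleC a (x + y) = scaleC a x + scaleC a y"
    and scaleC_add_left: "scaleC (a + b) x = scaleC a x + scaleC b x"
    and scaleC_scaleC: "scaleC a (scaleC b x) = scaleC (a * b) x"
    and scaleC_one: "scaleC 1 x = x"
    and scaleC_of_real: "scaleC (complex_of_real r) x = scaleR r x"
    and norm_scaleC: "norm (scaleC a x) = cmod a * norm x"

instantiation complex :: complex_banach
begin
definition scaleC_complex :: "complex \<Rightarrow> complex \<Rightarrow> complex" where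
  "scaleC_complex a x = a * x"
instance
  by standard (auto simp: scaleC_complex_def algebra_simps norm_mult scaleR_conv_of_real)
end

definition bounded_clinear_op :: "('a::complex_banach \<Rightarrow> 'a) \<Rightarrow> bool" where
  "bounded_clinear_op T \<longleftrightarrow> bounded_linear T \<and> (\<forall>a x. T (scaleC a x) = scaleC a (T x))"

definition op_spectrum :: "('a::complex_banach \<Rightarrow> 'a) \<Rightarrow> complex set" where
  "op_spectrum T = {z. \<not> (\<exists>S. bounded_linear S \<and>
       (\<forall>x. S (scaleC z x - T x) = x) \<and> (\<forall>y. scaleC z (S y) - T (S y) = y))}"

text \<open>Resolvent R(\<lambda>,T) = (\<lambda>I - T)^{-1} (meaningful for \<lambda> outside the spectrum).\<close>
definition resolvent :: "complex \<Rightarrow> ('a::complex_banach \<Rightarrow> 'a) \<Rightarrow> ('a \<Rightarrow> 'a)" where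
  "resolvent z T = inv (\<lambda>x. scaleC z x - T x)"

definition power_bounded :: "('a::complex_banach \<Rightarrow> 'a) \<Rightarrow> bool" where
  "power_bounded T \<longleftrightarrow> (\<exists>M. \<forall>n. onorm (T ^^ n) \<le> M)"

definition omega_star :: "(nat \<Rightarrow> real) \<Rightarrow> real \<Rightarrow> nat" where
  "omega_star \<omega> s = (LEAST n. \<omega> n \<le> s)"

end

theory Submission
  imports Defs
begin

text \<open>Fix z on the unit circle, z \<noteq> 1, and n.  The operator
  A = (\<Sum>k<n. z^(-k-1) T^k) + z^(-n) (z - 1)^(-1) T^n
  commutes with zI - T, and both products equal I + B with B = z^(-n) (z - 1)^(-1) T^n (I - T), so
  \<parallel>B\<parallel> \<le> \<omega>(n) / |z - 1|.  Whenever this is at most some q < 1, a Neumann series inverts I + B, whence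
  z \<notin> \<sigma>(T) and \<parallel>R(z,T)\<parallel> \<le> \<parallel>A\<parallel> / (1 - q) \<le> M (n + 1/|z - 1|) / (1 - q), where M bounds all \<parallel>T^k\<parallel>.
  For z = e^(i\<theta>) one has |z - 1| > c'|\<theta>| for small \<theta> and any c < c' < 1, so n = \<omega>*(c|\<theta>|) works
  with q = c/c'.\<close>

lemma scaleC_diff_right: "scaleC a (x - y) = scaleC a x - scaleC a (y::'a::complex_banach)"
  by (metis eq_diff_eq scaleC_add_right)

lemma bounded_linear_scaleC: "bounded_linear (scaleC a :: 'a::complex_banach \<Rightarrow> 'a)"
proof (rule bounded_linear_intro[where K="cmod a"])
  show "scaleC a (x + y) = scaleC a x + scaleC a y" for x y :: 'a by (rule scaleC_add_right)
  show "scaleC a (scaleR r x) = scaleR r (scaleC a x)" for r and x :: 'a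
    by (metis scaleC_of_real scaleC_scaleC mult.commute)
  show "norm (scaleC a x) \<le> norm x * cmod a" for x :: 'a by (simp add: norm_scaleC)
qed

lemma bounded_linear_funpow:
  fixes T :: "'a::real_normed_vector \<Rightarrow> 'a"
  assumes "bounded_linear T"
  shows "bounded_linear (T ^^ k)"
proof (induction k)
  case 0 then show ?case by (simp add: id_def bounded_linear_ident)
next
  case (Suc k) then show ?case using bounded_linear_compose[OF assms Suc.IH] by (simp add: o_def)
qed

lemma funpow_scaleC_commute:
  fixes T :: "'a::complex_banach \<Rightarrow> 'a"
  assumes "\<And>a x. T (scaleC a x) = scaleC a (T x)"
  shows "(T ^^ k) (scaleC a x) = scaleC a ((T ^^ k) x)"
  by (induction k) (simp_all add: assms)

lemma power_bounded_imp_norm_funpow_le: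
  fixes T :: "'a::complex_banach \<Rightarrow> 'a"
  assumes "bounded_linear T" and "power_bounded T"
  obtains M where "0 \<le> M" and "\<And>k y. norm ((T ^^ k) y) \<le> M * norm y"
proof -
  from assms(2) obtain M where M: "\<And>k. onorm (T ^^ k) \<le> M" unfolding power_bounded_def by auto
  have "norm ((T ^^ k) y) \<le> max M 0 * norm y" for k y
  proof -
    have "norm ((T ^^ k) y) \<le> onorm (T ^^ k) * norm y"
      by (rule onorm[OF bounded_linear_funpow[OF assms(1)]])
    also have "\<dots> \<le> max M 0 * norm y" by (rule mult_right_mono) (use M[of k] in auto)
    finally show ?thesis .
  qed
  then show thesis by (rule that[rotated]) simp
qed

lemma norm_funpow_contraction:
  fixes N :: "'a::real_normed_vector \<Rightarrow> 'a"
  assumes "\<And>y. norm (N y) \<le> q * norm y" and "0 \<le> q"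
  shows "norm ((N ^^ k) y) \<le> q ^ k * norm y"
proof (induction k)
  case 0 then show ?case by simp
next
  case (Suc k)
  have "norm ((N ^^ Suc k) y) \<le> q * norm ((N ^^ k) y)" using assms(1) by simp
  also have "\<dots> \<le> q * (q ^ k * norm y)" using Suc assms(2) by (rule mult_left_mono)
  finally show ?case by (simp add: mult.assoc)
qed

lemma neumann_series_inverse:
  fixes B :: "'a::banach \<Rightarrow> 'a"
  assumes bl: "bounded_linear B" and B_le: "\<And>y. norm (B y) \<le> q * norm y"
    and "0 \<le> q" and "q < 1"
  obtains C where "bounded_linear C" and "\<And>y. C y + B (C y) = y" and "\<And>y. C (y + B y) = y"
    and "\<And>y. norm (C y) \<le> norm y / (1 - q)"
proof -
  define N where "N y = - B y" for y
  have bl_N: "bounded_linear N" unfolding N_def using bl by (rule bounded_linear_minus)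
  have N_le: "norm ((N ^^ k) y) \<le> q ^ k * norm y" for k y
    by (rule norm_funpow_contraction) (use B_le \<open>0 \<le> q\<close> in \<open>simp_all add: N_def\<close>)
  have geometric: "summable (\<lambda>k. q ^ k * norm y)" for y
    by (rule summable_mult2, rule summable_geometric) (use assms in simp)
  have summable_N: "summable (\<lambda>k. (N ^^ k) y)" and summable_norm_N: "summable (\<lambda>k. norm ((N ^^ k) y))"
    for y by (rule summable_comparison_test'[OF geometric[of y]]; use N_le in simp)+
  define C where "C y = (\<Sum>k. (N ^^ k) y)" for y
  have C_le: "norm (C y) \<le> norm y / (1 - q)" for y
  proof -
    have "norm (C y) \<le> (\<Sum>k. norm ((N ^^ k) y))" unfolding C_def by (rule summable_norm[OF summable_norm_N])
    also have "\<dots> \<le> (\<Sum>k. q ^ k * norm y)" by (rule suminf_le[OF N_le summable_norm_N geometric])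
    also have "\<dots> = norm y / (1 - q)"
      using suminf_mult2[OF summable_geometric[of q], of "norm y"] suminf_geometric[of q] assms(3,4)
      by simp
    finally show ?thesis .
  qed
  have bl_C: "bounded_linear C"
  proof (rule bounded_linear_intro[where K="1 / (1 - q)"])
    show "C (x + y) = C x + C y" for x y
      unfolding C_def by (simp add: linear_add[OF bounded_linear.linear[OF bounded_linear_funpow[OF bl_N]]]
          suminf_add[OF summable_N summable_N])
    show "C (r *\<^sub>R x) = r *\<^sub>R C x" for r x
      unfolding C_def by (simp add: linear_scale[OF bounded_linear.linear[OF bounded_linear_funpow[OF bl_N]]]
          bounded_linear.suminf[OF bounded_linear_scaleR_right summable_N])
  qed (use C_le in simp)
  have shifted: "(\<Sum>k. (N ^^ Suc k) y) = C y - y" for y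
    unfolding C_def using suminf_split_head[OF summable_N[of y]] by simp
  have "N (C y) = C y - y" for y
    using bounded_linear.suminf[OF bl_N summable_N, of y] shifted[of y] by (simp add: C_def)
  then have "C y + B (C y) = y" for y by (simp add: N_def algebra_simps)
  moreover have "C (y + B y) = y" for y
  proof -
    have "C (N y) = C y - y" using shifted by (simp add: C_def funpow_swap1)
    then show ?thesis
      using linear_diff[OF bounded_linear.linear[OF bl_C], of y "N y"] by (simp add: N_def)
  qed
  ultimately show thesis using that bl_C C_le by blast
qed

text \<open>The tail (\<Sum>k\<ge>n. z^(-k-1) T^k) = z^(-n) T^n R(z,T) of the Neumann series of R(z,T) is
  truncated by replacing R(z,T) with (z - 1)^(-1), which is accurate where T acts almost as the identity.\<close>

definition partial_resolvent :: "complex \<Rightarrow> nat \<Rightarrow> ('a::complex_banach \<Rightarrow> 'a) \<Rightarrow> 'a \<Rightarrow> 'a" where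
  "partial_resolvent z n T y =
     (\<Sum>k<n. scaleC (inverse z ^ Suc k) ((T ^^ k) y)) + scaleC (inverse z ^ n / (z - 1)) ((T ^^ n) y)"

lemma partial_resolvent_telescope:
  fixes v :: "nat \<Rightarrow> 'a::complex_banach" and n :: nat
  assumes "z \<noteq> 0" and "z \<noteq> 1"
  defines "w \<equiv> inverse z ^ n / (z - 1)"
  shows "(\<Sum>k<n. scaleC (inverse z ^ Suc k) (scaleC z (v k) - v (Suc k)))
           + scaleC w (scaleC z (v n) - v (Suc n))
         = v 0 + scaleC w (v n - v (Suc n))"
proof -
  have "scaleC (inverse z ^ Suc k) (scaleC z (v k) - v (Suc k))
        = scaleC (inverse z ^ k) (v k) - scaleC (inverse z ^ Suc k) (v (Suc k))" for k
  proof -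
    have "inverse z ^ Suc k * z = inverse z ^ k" using assms(1) by (simp add: field_simps)
    then show ?thesis by (simp only: scaleC_scaleC scaleC_diff_right)
  qed
  then have "(\<Sum>k<n. scaleC (inverse z ^ Suc k) (scaleC z (v k) - v (Suc k)))
             = v 0 - scaleC (inverse z ^ n) (v n)"
    using sum_lessThan_telescope'[of "\<lambda>k. scaleC (inverse z ^ k) (v k)" n]
    by (simp only: scaleC_one power_0)
  moreover have "scaleC w (scaleC z (v n)) = scaleC (inverse z ^ n) (v n) + scaleC w (v n)"
  proof -
    have "w * z = inverse z ^ n + w" using assms(1,2) by (simp add: w_def field_simps)
    then show ?thesis by (simp add: scaleC_scaleC scaleC_add_left)
  qed
  ultimately show ?thesis by (simp add: scaleC_diff_right algebra_simps)
qed

lemma partial_resolvent_inverse_up_to_defect: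
  fixes T :: "'a::complex_banach \<Rightarrow> 'a" and n :: nat
  assumes T: "bounded_clinear_op T" and "z \<noteq> 0" and "z \<noteq> 1"
  defines "D \<equiv> \<lambda>y. scaleC (inverse z ^ n / (z - 1)) ((T ^^ n) (y - T y))"
  shows "scaleC z (partial_resolvent z n T y) - T (partial_resolvent z n T y) = y + D y"
    and "partial_resolvent z n T (scaleC z x - T x) = x + D x"
proof -
  from T have bl: "bounded_linear T" and cl: "\<And>a x. T (scaleC a x) = scaleC a (T x)"
    unfolding bounded_clinear_op_def by auto
  note T_power_diff = linear_diff[OF bounded_linear.linear[OF bounded_linear_funpow[OF bl]]]
  have T_power_T: "(T ^^ k) (T x) = T ((T ^^ k) x)" for k x by (simp add: funpow_swap1)
  define L where "L x = scaleC z x - T x" for x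
  have L_additive: "Modules.additive L" unfolding L_def
    by unfold_locales (simp add: scaleC_add_right linear_add[OF bounded_linear.linear[OF bl]] algebra_simps)
  have L_scaleC: "L (scaleC a u) = scaleC a (L u)" for a u
    unfolding L_def by (simp add: cl scaleC_scaleC scaleC_diff_right mult.commute)
  have "L (partial_resolvent z n T y)
        = (\<Sum>k<n. scaleC (inverse z ^ Suc k) (L ((T ^^ k) y)))
          + scaleC (inverse z ^ n / (z - 1)) (L ((T ^^ n) y))"
    unfolding partial_resolvent_def
    by (simp add: Modules.additive.add[OF L_additive] Modules.additive.sum[OF L_additive] L_scaleC)
  also have "\<dots> = y + D y"
    unfolding L_def D_def using partial_resolvent_telescope[OF assms(2,3), of "\<lambda>k. (T ^^ k) y"]
    by (simp add: T_power_diff T_power_T)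
  finally show "scaleC z (partial_resolvent z n T y) - T (partial_resolvent z n T y) = y + D y"
    by (simp add: L_def)
  show "partial_resolvent z n T (scaleC z x - T x) = x + D x"
    unfolding partial_resolvent_def D_def
    using partial_resolvent_telescope[OF assms(2,3), of "\<lambda>k. (T ^^ k) x"]
    by (simp add: T_power_diff T_power_T funpow_scaleC_commute[OF cl])
qed

lemma bounded_linear_partial_resolvent:
  fixes T :: "'a::complex_banach \<Rightarrow> 'a"
  assumes "bounded_linear T"
  shows "bounded_linear (partial_resolvent z n T)"
  unfolding partial_resolvent_def[abs_def]
  by (intro bounded_linear_add bounded_linear_sum bounded_linear_compose[OF bounded_linear_scaleC]
      bounded_linear_funpow assms)

lemma norm_partial_resolvent_le:
  fixes T :: "'a::complex_banach \<Rightarrow> 'a"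
  assumes M: "\<And>k y. norm ((T ^^ k) y) \<le> M * norm y" and "cmod z = 1" and "z \<noteq> 1"
  shows "norm (partial_resolvent z n T y) \<le> (real n * M + M / cmod (z - 1)) * norm y"
proof -
  have norm_inverse_z: "cmod (inverse z) = 1"
    using assms(2) by (simp add: norm_inverse)
  have "norm (partial_resolvent z n T y)
        \<le> (\<Sum>k<n. norm (scaleC (inverse z ^ Suc k) ((T ^^ k) y)))
          + norm (scaleC (inverse z ^ n / (z - 1)) ((T ^^ n) y))"
    unfolding partial_resolvent_def by (rule order_trans[OF norm_triangle_ineq add_right_mono[OF norm_sum]])
  also have "\<dots> \<le> (\<Sum>k<n. M * norm y) + (1 / cmod (z - 1)) * (M * norm y)"
    using assms(3) by (intro add_mono sum_mono)
      (auto simp: norm_scaleC norm_divide norm_mult norm_power norm_inverse_z M intro!: divide_right_mono)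
  also have "\<dots> = (real n * M + M / cmod (z - 1)) * norm y" by (simp add: algebra_simps)
  finally show ?thesis .
qed

lemma resolvent_on_circle_bound:
  fixes T :: "'a::complex_banach \<Rightarrow> 'a"
  assumes T: "bounded_clinear_op T"
    and M: "\<And>k y. norm ((T ^^ k) y) \<le> M * norm y" and "0 \<le> M"
    and z: "cmod z = 1" "z \<noteq> 1"
    and defect: "\<And>y. norm ((T ^^ n) (y - T y)) \<le> q * cmod (z - 1) * norm y"
    and "0 \<le> q" and "q < 1"
  shows "z \<notin> op_spectrum T" and "bounded_linear (resolvent z T)"
    and "onorm (resolvent z T) \<le> (real n * M + M / cmod (z - 1)) / (1 - q)"
proof -
  from T have bl: "bounded_linear T" unfolding bounded_clinear_op_def by auto
  have "z \<noteq> 0" using z by auto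
  define A where "A = partial_resolvent z n T"
  define D where "D y = scaleC (inverse z ^ n / (z - 1)) ((T ^^ n) (y - T y))" for y
  note A_L = partial_resolvent_inverse_up_to_defect[OF T \<open>z \<noteq> 0\<close> \<open>z \<noteq> 1\<close>, of n,
      folded A_def D_def]
  have bl_D: "bounded_linear D" unfolding D_def
    by (intro bounded_linear_compose[OF bounded_linear_scaleC] bounded_linear_compose[OF bounded_linear_funpow]
        bounded_linear_sub bounded_linear_ident bl)
  have D_le: "norm (D y) \<le> q * norm y" for y
  proof -
    have "norm (D y) = norm ((T ^^ n) (y - T y)) / cmod (z - 1)"
      using z by (simp add: D_def norm_scaleC norm_divide norm_power norm_inverse)
    also have "\<dots> \<le> q * norm y" using defect[of y] z by (simp add: pos_divide_le_eq mult_ac)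
    finally show ?thesis .
  qed
  obtain C where bl_C: "bounded_linear C" and C_right: "\<And>y. C y + D (C y) = y"
    and C_left: "\<And>y. C (y + D y) = y" and C_le: "\<And>y. norm (C y) \<le> norm y / (1 - q)"
    using neumann_series_inverse[OF bl_D D_le \<open>0 \<le> q\<close> \<open>q < 1\<close>] by blast
  define S where "S y = A (C y)" for y
  have S_right: "scaleC z (S y) - T (S y) = y" for y unfolding S_def A_L(1) C_right ..
  have C_A_left: "C (A (scaleC z x - T x)) = x" for x unfolding A_L(2) C_left ..
  have S_eq: "S y = C (A y)" for y
    \<comment> \<open>a right inverse and a left inverse of zI - T coincide\<close>
    using C_A_left[of "S y"] by (simp only: S_right)
  have S_left: "S (scaleC z x - T x) = x" for x unfolding S_eq C_A_left ..
  have bl_S: "bounded_linear S"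
    unfolding S_def A_def by (rule bounded_linear_compose[OF bounded_linear_partial_resolvent[OF bl] bl_C])
  then show "z \<notin> op_spectrum T"
    using S_left S_right unfolding op_spectrum_def by blast
  have R_eq: "resolvent z T = S" unfolding resolvent_def by (rule inv_equality) (use S_left S_right in auto)
  with bl_S show "bounded_linear (resolvent z T)" by simp
  have "onorm S \<le> (real n * M + M / cmod (z - 1)) / (1 - q)"
  proof (rule onorm_bound)
    show "0 \<le> (real n * M + M / cmod (z - 1)) / (1 - q)" using \<open>0 \<le> M\<close> \<open>q < 1\<close> by simp
    fix y
    have "norm (S y) \<le> (real n * M + M / cmod (z - 1)) * norm (C y)"
      unfolding S_def A_def by (rule norm_partial_resolvent_le[OF M z])
    also have "\<dots> \<le> (real n * M + M / cmod (z - 1)) * (norm y / (1 - q))"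
      by (rule mult_left_mono[OF C_le]) (use \<open>0 \<le> M\<close> in simp)
    finally show "norm (S y) \<le> (real n * M + M / cmod (z - 1)) / (1 - q) * norm y" by simp
  qed
  then show "onorm (resolvent z T) \<le> (real n * M + M / cmod (z - 1)) / (1 - q)" by (simp add: R_eq)
qed

lemma omega_star_le:
  assumes "\<omega> \<longlonglongrightarrow> 0" and "0 < s"
  shows "\<omega> (omega_star \<omega> s) \<le> s"
proof -
  from order_tendstoD(2)[OF assms] have "\<forall>\<^sub>F n in sequentially. \<omega> n < s" .
  then obtain n where "\<omega> n < s" by (auto simp only: eventually_sequentially)
  then show ?thesis unfolding omega_star_def by (rule LeastI[OF less_imp_le])

qed

lemma eventually_norm_exp_i_minus_one_gt:
  assumes "c < 1"
  shows "\<forall>\<^sub>F t in at (0::real). c * \<bar>t\<bar> < cmod (exp (\<i> * of_real t) - 1)"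
proof -
  have "((\<lambda>h. exp (\<i> * h)) has_field_derivative \<i>) (at 0)"
    by (auto intro!: derivative_eq_intros)
  from DERIV_D[OF this] have "((\<lambda>h. (exp (\<i> * h) - 1) / h) \<longlongrightarrow> \<i>) (at 0)"
    by simp
  moreover have "filterlim complex_of_real (at 0) (at 0)"
    by (intro filterlim_atI) (auto intro!: tendsto_eq_intros simp: eventually_at_filter)
  ultimately have "((\<lambda>t::real. (exp (\<i> * of_real t) - 1) / of_real t) \<longlongrightarrow> \<i>) (at 0)"
    by (rule filterlim_compose)
  from order_tendstoD(1)[OF tendsto_norm[OF this]]
  have "\<forall>\<^sub>F t in at (0::real). c < cmod ((exp (\<i> * of_real t) - 1) / of_real t)"
    using assms by simp
  moreover have "\<forall>\<^sub>F t in at (0::real). t \<noteq> 0" by (simp add: eventually_at_filter)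
  ultimately show ?thesis
    by eventually_elim (simp add: norm_divide pos_less_divide_eq)
qed

lemma op_spectrum_inter_sphere_subset_one:
  fixes T :: "'a::complex_banach \<Rightarrow> 'a" and \<omega> :: "nat \<Rightarrow> real"
  assumes T: "bounded_clinear_op T"
    and M: "\<And>k y. norm ((T ^^ k) y) \<le> M * norm y" and "0 \<le> M"
    and defect: "\<And>n y. norm ((T ^^ n) (y - T y)) \<le> \<omega> n * norm y"
    and "\<omega> \<longlonglongrightarrow> 0"
  shows "op_spectrum T \<inter> sphere 0 1 \<subseteq> {1}"
proof
  fix z assume z: "z \<in> op_spectrum T \<inter> sphere 0 1"
  show "z \<in> {1}"
  proof (rule ccontr)
    assume "z \<notin> {1}"
    then have "0 < cmod (z - 1) / 2" by simp
    define n where "n = omega_star \<omega> (cmod (z - 1) / 2)"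
    have "\<omega> n \<le> 1 / 2 * cmod (z - 1)"
      using omega_star_le[OF \<open>\<omega> \<longlonglongrightarrow> 0\<close> \<open>0 < cmod (z - 1) / 2\<close>] by (simp add: n_def)
    then have "norm ((T ^^ n) (y - T y)) \<le> 1 / 2 * cmod (z - 1) * norm y" for y
      by (rule order_trans[OF defect mult_right_mono]) simp
    from resolvent_on_circle_bound(1)[OF T M \<open>0 \<le> M\<close> _ _ this] z \<open>z \<notin> {1}\<close> show False
      by simp
  qed
qed

lemma onorm_resolvent_exp_bigo:
  fixes T :: "'a::complex_banach \<Rightarrow> 'a" and \<omega> :: "nat \<Rightarrow> real"
  assumes T: "bounded_clinear_op T"
    and M: "\<And>k y. norm ((T ^^ k) y) \<le> M * norm y" and "0 \<le> M"
    and defect: "\<And>n y. norm ((T ^^ n) (y - T y)) \<le> \<omega> n * norm y"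
    and "\<omega> \<longlonglongrightarrow> 0" and "0 < c" and "c < 1"
  shows "(\<lambda>\<theta>::real. onorm (resolvent (exp (\<i> * complex_of_real \<theta>)) T))
           \<in> O[at 0](\<lambda>\<theta>. 1 / \<bar>\<theta>\<bar> + real (omega_star \<omega> (c * \<bar>\<theta>\<bar>)))"
proof -
  define c' where "c' = (1 + c) / 2"
  define q where "q = c / c'"
  have "0 < c'" "c < c'" "c' < 1" "0 \<le> q" "q < 1" using \<open>0 < c\<close> \<open>c < 1\<close> by (auto simp: c'_def q_def)
  define K where "K = (M + M / c') / (1 - q)"
  show ?thesis
  proof (rule bigoI[where c=K])
    have "\<forall>\<^sub>F t in at (0::real). c' * \<bar>t\<bar> < cmod (exp (\<i> * of_real t) - 1) \<and> t \<noteq> 0"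
      using eventually_norm_exp_i_minus_one_gt[OF \<open>c' < 1\<close>]
      by (simp add: eventually_conj_iff eventually_at_filter)
    then show "\<forall>\<^sub>F t in at 0. norm (onorm (resolvent (exp (\<i> * complex_of_real t)) T))
            \<le> K * norm (1 / \<bar>t\<bar> + real (omega_star \<omega> (c * \<bar>t\<bar>)))"
    proof eventually_elim
      case (elim t)
      define z where "z = exp (\<i> * complex_of_real t)"
      define n where "n = omega_star \<omega> (c * \<bar>t\<bar>)"
      have t: "0 < c' * \<bar>t\<bar>" "c' * \<bar>t\<bar> < cmod (z - 1)"
        using elim \<open>c < c'\<close> \<open>0 < c\<close> by (auto simp: z_def)
      then have "z \<noteq> 1" by auto
      have "\<omega> n \<le> q * (c' * \<bar>t\<bar>)"
        using omega_star_le[OF \<open>\<omega> \<longlonglongrightarrow> 0\<close>, of "c * \<bar>t\<bar>"] elim \<open>0 < c\<close> \<open>c < c'\<close>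
        by (simp add: n_def q_def)
      also have "\<dots> \<le> q * cmod (z - 1)" using t \<open>0 \<le> q\<close> by (intro mult_left_mono) auto
      finally have "norm ((T ^^ n) (y - T y)) \<le> q * cmod (z - 1) * norm y" for y
        by (rule order_trans[OF defect mult_right_mono]) simp
      note R_bound = resolvent_on_circle_bound(2,3)[OF T M \<open>0 \<le> M\<close> _ \<open>z \<noteq> 1\<close> this \<open>0 \<le> q\<close> \<open>q < 1\<close>]
      have "onorm (resolvent z T) \<le> (real n * M + M / cmod (z - 1)) / (1 - q)"
        using R_bound by (simp add: z_def)
      also have "\<dots> \<le> (real n * M + M / (c' * \<bar>t\<bar>)) / (1 - q)"
        using t \<open>0 \<le> M\<close> \<open>q < 1\<close>
        by (intro divide_right_mono add_left_mono divide_left_mono) (auto intro!: mult_pos_pos)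
      also have "\<dots> \<le> K * (1 / \<bar>t\<bar> + real n)"
      proof -
        have "real n * M + M / (c' * \<bar>t\<bar>) \<le> (M + M / c') * (1 / \<bar>t\<bar> + real n)"
          using \<open>0 \<le> M\<close> \<open>0 < c'\<close> t by (simp add: algebra_simps)
        then show ?thesis unfolding K_def using \<open>q < 1\<close> by (simp add: divide_right_mono)
      qed
      finally show ?case
        using onorm_pos_le[OF R_bound(1)] by (simp add: z_def n_def)
    qed
  qed
qed

theorem theorem2p4:
  fixes T :: "'a::complex_banach \<Rightarrow> 'a" and \<omega> :: "nat \<Rightarrow> real" and c :: real
  assumes "bounded_clinear_op T"
    and "power_bounded T"
    and "\<And>n. \<omega> n > 0"
    and "antimono \<omega>"
    and "\<And>n. onorm (\<lambda>x. (T ^^ n) (x - T x)) \<le> \<omega> n"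
    and "\<omega> \<longlonglongrightarrow> 0"
    and "0 < c" and "c < 1"
  shows "op_spectrum T \<inter> sphere 0 1 \<subseteq> {1} \<and>
         (\<lambda>\<theta>::real. onorm (resolvent (exp (\<i> * complex_of_real \<theta>)) T))
           \<in> O[at 0](\<lambda>\<theta>. 1 / \<bar>\<theta>\<bar> + real (omega_star \<omega> (c * \<bar>\<theta>\<bar>)))"
proof -
  from assms(1) have bl: "bounded_linear T" unfolding bounded_clinear_op_def by auto
  obtain M where "0 \<le> M" and M: "\<And>k y. norm ((T ^^ k) y) \<le> M * norm y"
    using power_bounded_imp_norm_funpow_le[OF bl assms(2)] by blast
  have defect: "norm ((T ^^ n) (y - T y)) \<le> \<omega> n * norm y" for n y
  proof -
    have "bounded_linear (\<lambda>x. (T ^^ n) (x - T x))"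
      by (intro bounded_linear_compose[OF bounded_linear_funpow[OF bl]] bounded_linear_sub
          bounded_linear_ident bl)
    from onorm[OF this] show ?thesis by (rule order_trans) (intro mult_right_mono assms(5) norm_ge_zero)
  qed
  show ?thesis
    using op_spectrum_inter_sphere_subset_one[OF assms(1) M \<open>0 \<le> M\<close> defect assms(6)]
      onorm_resolvent_exp_bigo[OF assms(1) M \<open>0 \<le> M\<close> defect assms(6-8)]
    by blast
qed

end
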